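(* Let $A=\begin{bmatrix}T_{SS}&T_{SR}\\ 0&T_{RR}\end{bmatrix}\in\mathbb{R}^{N\times N}$ be a combination matrix of the weakly-connected form described in the context. Then $I-T_{RR}$ is invertible and the limit $\lim_{n\to\infty}A^n$ exists and equals $$A_\infty=\begin{bmatrix}\Theta & \Theta W\\ 0 & 0\end{bmatrix},\qquad W=T_{SR}(I-T_{RR})^{-1},\qquad \Theta=\mathrm{blockdiag}\{p_1\mathbb{1}_{N_1}^{\mathsf T},\dots,p_S\mathbb{1}_{N_S}^{\mathsf T}\},$$ where $p_s$ is the Perron vector of $A_s$ and $\mathbb{1}_{N_s}$ is the all-ones vector of length $N_s$.
   Context: $N$ agents are partitioned into sub-networks $1,\dots,S+R$ ($S\ge 1$), sub-network $j$ having $N_j$ agents; agents are numbered so that those of sub-networks $1,\dots,S$ (group $S$, $N_{gS}=N_1+\cdots+N_S$ agents) come first, followed by those of sub-networks $S+1,\dots,S+R$ (group $R$, $N_{gR}=N_{S+1}+\cdots+N_{S+R}$ agents). The combination matrix $A=[a_{\ell k}]$ has nonnegative entries, is left-stochastic ($\sum_{\ell}a_{\ell k}=1$ for every $k$, i.e. $A^{\mathsf T}\mathbb{1}=\mathbb{1}$), and has the block form $A=\begin{bmatrix}T_{SS}&T_{SR}\\0&T_{RR}\end{bmatrix}$ with $T_{SS}\in\mathbb{R}^{N_{gS}\times N_{gS}}$, $T_{RR}\in\mathbb{R}^{N_{gR}\times N_{gR}}$. Here $T_{SS}=\mathrm{blockdiag}\{A_1,\dots,A_S\}$ where each $A_s\in\mathbb{R}^{N_s\times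 N_s}$ is left-stochastic and primitive (sub-network $s$ is strongly connected). $T_{RR}$ is block upper triangular with diagonal blocks $A_{S+1},\dots,A_{S+R}$, where $A_r\in\mathbb{R}^{N_r\times N_r}$ contains the weights on edges internal to sub-network $r$; each sub-network $r$ of group $R$ is connected (so $A_r$ is a nonnegative irreducible matrix) and receives information from agents outside it, so that at least one column of $A_r$ sums to a number strictly smaller than one. For $s=1,\dots,S$, the Perron vector $p_s$ of $A_s$ is the unique vector with $A_sp_s=p_s$, $\mathbb{1}^{\mathsf T}p_s=1$, and all entries positive. *)

theory Defs
  imports Complex_Main "Jordan_Normal_Form.Gauss_Jordan_Elimination"
begin

definition nonneg_mat :: "real mat \<Rightarrow> bool" where
  "nonneg_mat M \<longleftrightarrow> (\<forall>i<dim_row M. \<forall>k<dim_col M. M $$ (i,k) \<ge> 0)"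

definition irreducible_mat :: "real mat \<Rightarrow> bool" where
  "irreducible_mat M \<longleftrightarrow> square_mat M \<and> nonneg_mat M \<and>
     (\<forall>i<dim_row M. \<forall>j<dim_row M. \<exists>m\<ge>1. (M ^\<^sub>m m) $$ (i,j) > 0)"

definition primitive_mat :: "real mat \<Rightarrow> bool" where
  "primitive_mat M \<longleftrightarrow> square_mat M \<and> nonneg_mat M \<and>
     (\<exists>m\<ge>1. \<forall>i<dim_row M. \<forall>j<dim_row M. (M ^\<^sub>m m) $$ (i,j) > 0)"

definition left_stochastic :: "real mat \<Rightarrow> bool" where
  "left_stochastic M \<longleftrightarrow> (\<forall>k<dim_col M. (\<Sum>i<dim_row M. M $$ (i,k)) = 1)"

definition perron_vec :: "real mat \<Rightarrow> real vec" where
  "perron_vec M = (THE p. p \<in> carrier_vec (dim_row M) \<and> M *\<^sub>v p = p \<and>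
      (\<Sum>i<dim_vec p. p $ i) = 1 \<and> (\<forall>i<dim_vec p. p $ i > 0))"

definition perron_block :: "real mat \<Rightarrow> real mat" where
  "perron_block M = mat (dim_row M) (dim_row M) (\<lambda>(i,k). perron_vec M $ i)"

definition blk_off :: "nat list \<Rightarrow> nat \<Rightarrow> nat" where
  "blk_off Ns j = sum_list (take j Ns)"

definition diag_blk :: "real mat \<Rightarrow> nat list \<Rightarrow> nat \<Rightarrow> real mat" where
  "diag_blk M Ns j = mat (Ns ! j) (Ns ! j) (\<lambda>(i,k). M $$ (blk_off Ns j + i, blk_off Ns j + k))"

definition block_upper_tri :: "real mat \<Rightarrow> nat list \<Rightarrow> bool" where
  "block_upper_tri M Ns \<longleftrightarrow> (\<forall>j1<length Ns. \<forall>j2<j1. \<forall>i<Ns ! j1. \<forall>k<Ns ! j2.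
      M $$ (blk_off Ns j1 + i, blk_off Ns j2 + k) = 0)"

end

theory Submission
  imports Defs "Jordan_Normal_Form.Determinant"
begin

text \<open>
  The powers of \<open>A\<close> are block upper triangular, with diagonal blocks \<open>D\<^sup>n\<close>, \<open>T\<^sup>n\<close>
  (\<open>D = T\<^sub>S\<^sub>S\<close>, \<open>T = T\<^sub>R\<^sub>R\<close>) and corner \<open>X\<^sub>n\<close> with \<open>X\<^sub>n\<^sub>+\<^sub>1 = D\<^sup>n S + X\<^sub>n T\<close>.
  For a primitive column-stochastic block \<open>P\<close>, right multiplication by the positive power
  \<open>P\<^sup>m\<close> shrinks the oscillation of every row of \<open>P\<^sup>t\<close> by a fixed factor below one, so the
  rows of \<open>P\<^sup>t\<close> become constant; the limit is \<open>p 1\<^sup>T\<close> with \<open>p\<close> the Perron vector.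
  The column sums of the powers of the substochastic \<open>T\<close> never increase, and a column
  whose sum has dropped below one passes the deficit on to every column it reaches. The leak
  of each block, irreducibility and triangularity make every column deficient, so the column
  sums of \<open>T\<^sup>t\<close> decay geometrically, \<open>T\<^sup>t \<rightarrow> 0\<close>, and \<open>I - T\<close> has no fixed vector, hence is
  invertible. Finally \<open>\<Theta> D = \<Theta>\<close> turns \<open>\<Theta> X\<^sub>m\<close> into \<open>L - L T\<^sup>m\<close> with
  \<open>L = \<Theta> S (I - T)\<^sup>-\<^sup>1\<close>, and \<open>X\<^sub>n\<^sub>+\<^sub>m = D\<^sup>n X\<^sub>m + X\<^sub>n T\<^sup>m\<close> shows \<open>X\<^sub>n \<rightarrow> L\<close>.
\<close>

lemma index_mult_mat_sum:
  assumes "A \<in> carrier_mat n m" "B \<in> carrier_mat m p" "i < n" "j < p"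
  shows "(A * B) $$ (i,j) = (\<Sum>k<m. A $$ (i,k) * B $$ (k,j))"
  using assms by (auto simp: scalar_prod_def lessThan_atLeast0 intro!: sum.cong)

lemma index_mult_mat_vec_sum:
  assumes "A \<in> carrier_mat n m" "v \<in> carrier_vec m" "i < n"
  shows "(A *\<^sub>v v) $ i = (\<Sum>j<m. A $$ (i,j) * v $ j)"
  using assms by (auto simp: scalar_prod_def lessThan_atLeast0 intro!: sum.cong)

lemma pow_mat_add:
  assumes "A \<in> carrier_mat n n"
  shows "A ^\<^sub>m (a + b) = A ^\<^sub>m a * A ^\<^sub>m b"
proof (induct b)
  case 0
  then show ?case using assms by simp
next
  case (Suc b)
  have "A ^\<^sub>m (a + Suc b) = (A ^\<^sub>m a * A ^\<^sub>m b) * A" using Suc by simp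
  also have "\<dots> = A ^\<^sub>m a * (A ^\<^sub>m b * A)"
    using assms by (intro assoc_mult_mat) auto
  finally show ?case by simp
qed

lemma pow_mat_fixed_vec:
  assumes "A \<in> carrier_mat n n" "v \<in> carrier_vec n" "A *\<^sub>v v = v"
  shows "A ^\<^sub>m t *\<^sub>v v = v"
proof (induct t)
  case 0
  then show ?case using assms by simp
next
  case (Suc t)
  have "A ^\<^sub>m Suc t *\<^sub>v v = A ^\<^sub>m t *\<^sub>v (A *\<^sub>v v)"
    unfolding pow_mat.simps by (rule assoc_mult_mat_vec[OF pow_carrier_mat[OF assms(1)] assms(1,2)])
  then show ?case using Suc assms by simp
qed

definition col_sum :: "real mat \<Rightarrow> nat \<Rightarrow> real" where
  "col_sum M k = (\<Sum>i<dim_row M. M $$ (i,k))"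

lemma left_stochastic_iff_col_sum: "left_stochastic M \<longleftrightarrow> (\<forall>k<dim_col M. col_sum M k = 1)"
  by (simp add: left_stochastic_def col_sum_def)

lemma nonneg_matD: "nonneg_mat M \<Longrightarrow> i < dim_row M \<Longrightarrow> k < dim_col M \<Longrightarrow> 0 \<le> M $$ (i,k)"
  by (simp add: nonneg_mat_def)

lemma nonneg_mat_mult:
  assumes "A \<in> carrier_mat n m" "B \<in> carrier_mat m p" "nonneg_mat A" "nonneg_mat B"
  shows "nonneg_mat (A * B)"
  unfolding nonneg_mat_def
proof (intro allI impI)
  fix i j assume "i < dim_row (A * B)" "j < dim_col (A * B)"
  then have ij: "i < n" "j < p" using assms by auto
  show "0 \<le> (A * B) $$ (i,j)"
    unfolding index_mult_mat_sum[OF assms(1,2) ij] using assms ij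
    by (auto simp: nonneg_mat_def intro!: sum_nonneg)
qed

lemma nonneg_mat_pow:
  assumes "A \<in> carrier_mat n n" "nonneg_mat A"
  shows "nonneg_mat (A ^\<^sub>m t)"
proof (induct t)
  case 0
  then show ?case by (auto simp: nonneg_mat_def)
next
  case (Suc t)
  then show ?case using nonneg_mat_mult[OF pow_carrier_mat[OF assms(1)] assms(1) Suc assms(2)] by simp
qed

lemma nonneg_mat_entry_le_col_sum:
  assumes "nonneg_mat M" "i < dim_row M" "k < dim_col M"
  shows "M $$ (i,k) \<le> col_sum M k"
  unfolding col_sum_def using assms by (intro member_le_sum) (auto simp: nonneg_mat_def)

lemma col_sum_mult:
  assumes "A \<in> carrier_mat n m" "B \<in> carrier_mat m p" "k < p"
  shows "col_sum (A * B) k = (\<Sum>j<m. col_sum A j * B $$ (j,k))"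
proof -
  have "col_sum (A * B) k = (\<Sum>i<n. \<Sum>j<m. A $$ (i,j) * B $$ (j,k))"
    unfolding col_sum_def using assms by (intro sum.cong refl index_mult_mat_sum) auto
  also have "\<dots> = (\<Sum>j<m. \<Sum>i<n. A $$ (i,j) * B $$ (j,k))" by (rule sum.swap)
  finally show ?thesis using assms by (simp add: col_sum_def sum_distrib_right)
qed

lemma col_sum_one: "k < n \<Longrightarrow> col_sum (1\<^sub>m n) k = 1"
  by (simp add: col_sum_def sum.delta[unfolded eq_commute[of k]] if_distrib cong: if_cong)

lemma left_stochastic_mult:
  assumes "A \<in> carrier_mat n n" "B \<in> carrier_mat n n" "left_stochastic A" "left_stochastic B"
  shows "left_stochastic (A * B)"
  using assms by (auto simp: left_stochastic_iff_col_sum col_sum_mult[OF assms(1,2)])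
    (simp add: col_sum_def left_stochastic_def)

lemma left_stochastic_pow:
  assumes "A \<in> carrier_mat n n" "left_stochastic A"
  shows "left_stochastic (A ^\<^sub>m t)"
proof (induct t)
  case 0
  then show ?case by (simp add: left_stochastic_iff_col_sum col_sum_one)
next
  case (Suc t)
  then show ?case using left_stochastic_mult[OF pow_carrier_mat[OF assms(1)] assms(1) Suc assms(2)] by simp
qed

lemma nonneg_left_stochastic_entry_le_1:
  assumes "nonneg_mat M" "left_stochastic M" "i < dim_row M" "k < dim_col M"
  shows "M $$ (i,k) \<le> 1"
  using nonneg_mat_entry_le_col_sum[OF assms(1,3,4)] assms(2,4)
  by (simp add: left_stochastic_iff_col_sum)

definition mat_tendsto :: "(nat \<Rightarrow> real mat) \<Rightarrow> real mat \<Rightarrow> bool" where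
  "mat_tendsto M L \<longleftrightarrow> (\<forall>i<dim_row L. \<forall>k<dim_col L. (\<lambda>n. M n $$ (i,k)) \<longlonglongrightarrow> L $$ (i,k))"

lemma mat_tendsto_mult_right:
  assumes "\<And>n. M n \<in> carrier_mat a b" "L \<in> carrier_mat a b" "C \<in> carrier_mat b c"
    and "mat_tendsto M L"
  shows "mat_tendsto (\<lambda>n. M n * C) (L * C)"
  unfolding mat_tendsto_def
proof (intro allI impI)
  fix i k assume "i < dim_row (L * C)" "k < dim_col (L * C)"
  then have ik: "i < a" "k < c" using assms by auto
  have "(\<lambda>n. \<Sum>j<b. M n $$ (i,j) * C $$ (j,k)) \<longlonglongrightarrow> (\<Sum>j<b. L $$ (i,j) * C $$ (j,k))"
    using assms ik by (intro tendsto_intros) (auto simp: mat_tendsto_def)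
  moreover have "(M n * C) $$ (i,k) = (\<Sum>j<b. M n $$ (i,j) * C $$ (j,k))" for n
    using assms ik by (intro index_mult_mat_sum)
  moreover have "(L * C) $$ (i,k) = (\<Sum>j<b. L $$ (i,j) * C $$ (j,k))"
    using assms ik by (intro index_mult_mat_sum)
  ultimately show "(\<lambda>n. (M n * C) $$ (i,k)) \<longlonglongrightarrow> (L * C) $$ (i,k)" by simp
qed

lemma mat_tendsto_mult_left:
  assumes "\<And>n. M n \<in> carrier_mat b c" "L \<in> carrier_mat b c" "C \<in> carrier_mat a b"
    and "mat_tendsto M L"
  shows "mat_tendsto (\<lambda>n. C * M n) (C * L)"
  unfolding mat_tendsto_def
proof (intro allI impI)
  fix i k assume "i < dim_row (C * L)" "k < dim_col (C * L)"
  then have ik: "i < a" "k < c" using assms by auto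
  have "(\<lambda>n. \<Sum>j<b. C $$ (i,j) * M n $$ (j,k)) \<longlonglongrightarrow> (\<Sum>j<b. C $$ (i,j) * L $$ (j,k))"
    using assms ik by (intro tendsto_intros) (auto simp: mat_tendsto_def)
  moreover have "(C * M n) $$ (i,k) = (\<Sum>j<b. C $$ (i,j) * M n $$ (j,k))" for n
    using assms ik by (intro index_mult_mat_sum)
  moreover have "(C * L) $$ (i,k) = (\<Sum>j<b. C $$ (i,j) * L $$ (j,k))"
    using assms ik by (intro index_mult_mat_sum)
  ultimately show "(\<lambda>n. (C * M n) $$ (i,k)) \<longlonglongrightarrow> (C * L) $$ (i,k)" by simp
qed

lemma mat_tendsto_four_block:
  assumes "\<And>n. A n \<in> carrier_mat r1 c1" "\<And>n. D n \<in> carrier_mat r2 c2"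
    and "A' \<in> carrier_mat r1 c1" "B' \<in> carrier_mat r1 c2" "C' \<in> carrier_mat r2 c1"
    and "D' \<in> carrier_mat r2 c2"
    and "mat_tendsto A A'" "mat_tendsto B B'" "mat_tendsto C C'" "mat_tendsto D D'"
  shows "mat_tendsto (\<lambda>n. four_block_mat (A n) (B n) (C n) (D n)) (four_block_mat A' B' C' D')"
proof -
  have "dim_row (A n) = r1" "dim_col (A n) = c1" "dim_row (D n) = r2" "dim_col (D n) = c2" for n
    using assms(1,2) by auto
  then show ?thesis using assms(3-) by (auto simp: mat_tendsto_def)
qed

lemma mat_tendsto_const: "mat_tendsto (\<lambda>n. M) M"
  by (simp add: mat_tendsto_def)

section \<open>Powers of primitive stochastic matrices\<close>

lemma weighted_sum_bounds:
  fixes x w :: "nat \<Rightarrow> real"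
  assumes "\<And>j. j < n \<Longrightarrow> \<delta> \<le> w j" "(\<Sum>j<n. w j) = 1"
    and "\<And>j. j < n \<Longrightarrow> lo \<le> x j" "\<And>j. j < n \<Longrightarrow> x j \<le> hi"
  shows "lo * (1 - n * \<delta>) + \<delta> * (\<Sum>j<n. x j) \<le> (\<Sum>j<n. x j * w j)"
    and "(\<Sum>j<n. x j * w j) \<le> hi * (1 - n * \<delta>) + \<delta> * (\<Sum>j<n. x j)"
proof -
  have split: "(\<Sum>j<n. x j * w j) = (\<Sum>j<n. x j * (w j - \<delta>)) + \<delta> * (\<Sum>j<n. x j)"
    by (simp add: algebra_simps sum.distrib sum_distrib_left sum_subtractf)
  have excess: "(\<Sum>j<n. w j - \<delta>) = 1 - n * \<delta>" using assms by (simp add: sum_subtractf)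
  have "(\<Sum>j<n. lo * (w j - \<delta>)) \<le> (\<Sum>j<n. x j * (w j - \<delta>))"
    using assms by (intro sum_mono mult_right_mono) auto
  then show "lo * (1 - n * \<delta>) + \<delta> * (\<Sum>j<n. x j) \<le> (\<Sum>j<n. x j * w j)"
    unfolding split excess[symmetric] by (simp add: sum_distrib_left)
  have "(\<Sum>j<n. x j * (w j - \<delta>)) \<le> (\<Sum>j<n. hi * (w j - \<delta>))"
    using assms by (intro sum_mono mult_right_mono) auto
  then show "(\<Sum>j<n. x j * w j) \<le> hi * (1 - n * \<delta>) + \<delta> * (\<Sum>j<n. x j)"
    unfolding split excess[symmetric] by (simp add: sum_distrib_left)
qed

lemma contracting_brackets_converge:
  fixes lo hi :: "nat \<Rightarrow> real"
  assumes "decseq hi" "incseq lo" "\<And>t. lo t \<le> hi t" "q < 1"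
    and "\<And>t. hi (t + m) - lo (t + m) \<le> q * (hi t - lo t)"
  obtains L where "hi \<longlonglongrightarrow> L" "lo \<longlonglongrightarrow> L"
proof -
  have "lo 0 \<le> hi t" "lo t \<le> hi 0" for t
    using incseqD[OF assms(2), of 0 t] decseqD[OF assms(1), of 0 t] assms(3)[of t] by auto
  then obtain h l where h: "hi \<longlonglongrightarrow> h" and l: "lo \<longlonglongrightarrow> l"
    using decseq_convergent[OF assms(1)] incseq_convergent[OF assms(2)] by metis
  have "(\<lambda>t. hi (t + m) - lo (t + m)) \<longlonglongrightarrow> h - l"
    using LIMSEQ_ignore_initial_segment[OF h] LIMSEQ_ignore_initial_segment[OF l]
    by (rule tendsto_diff)
  moreover have "(\<lambda>t. q * (hi t - lo t)) \<longlonglongrightarrow> q * (h - l)" using h l by (intro tendsto_intros)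
  ultimately have "h - l \<le> q * (h - l)" by (rule lim_mono[rotated]) (use assms(5) in auto)
  moreover have "l \<le> h" by (rule lim_mono[OF _ l h]) (use assms(3) in auto)
  ultimately have "h = l" using assms(4) by (smt (verit) mult_le_cancel_right1)
  then show ?thesis using that h l by blast
qed

definition row_max :: "real mat \<Rightarrow> nat \<Rightarrow> real" where
  "row_max M i = Max ((\<lambda>k. M $$ (i,k)) ` {..<dim_col M})"

definition row_min :: "real mat \<Rightarrow> nat \<Rightarrow> real" where
  "row_min M i = Min ((\<lambda>k. M $$ (i,k)) ` {..<dim_col M})"

lemma row_min_le: "k < dim_col M \<Longrightarrow> row_min M i \<le> M $$ (i,k)"
  unfolding row_min_def by (intro Min_le) auto

lemma le_row_max: "k < dim_col M \<Longrightarrow> M $$ (i,k) \<le> row_max M i"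
  unfolding row_max_def by (intro Max_ge) auto

lemma row_max_attained:
  assumes "0 < dim_col M"
  obtains k where "k < dim_col M" "row_max M i = M $$ (i,k)"
proof -
  have "row_max M i \<in> (\<lambda>k. M $$ (i,k)) ` {..<dim_col M}"
    unfolding row_max_def using assms by (intro Max_in) auto
  then show ?thesis using that by auto
qed

lemma row_min_attained:
  assumes "0 < dim_col M"
  obtains k where "k < dim_col M" "row_min M i = M $$ (i,k)"
proof -
  have "row_min M i \<in> (\<lambda>k. M $$ (i,k)) ` {..<dim_col M}"
    unfolding row_min_def using assms by (intro Min_in) auto
  then show ?thesis using that by auto
qed

text \<open>Right multiplication by a stochastic matrix replaces each row entry by a weighted average
  of that row; a uniform lower bound \<open>\<delta>\<close> on the weights pulls the average towards the row mean.\<close>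

lemma row_bounds_mult_stochastic:
  assumes M: "M \<in> carrier_mat a n" and Q: "Q \<in> carrier_mat n n" "left_stochastic Q"
    and \<delta>: "\<And>j k. j < n \<Longrightarrow> k < n \<Longrightarrow> \<delta> \<le> Q $$ (j,k)" and ik: "i < a" "k < n"
  shows "row_min M i * (1 - n * \<delta>) + \<delta> * (\<Sum>j<n. M $$ (i,j)) \<le> (M * Q) $$ (i,k)"
    and "(M * Q) $$ (i,k) \<le> row_max M i * (1 - n * \<delta>) + \<delta> * (\<Sum>j<n. M $$ (i,j))"
proof -
  have "(\<Sum>j<n. Q $$ (j,k)) = 1" using Q ik by (simp add: left_stochastic_def)
  moreover have "row_min M i \<le> M $$ (i,j)" "M $$ (i,j) \<le> row_max M i" if "j < n" for j
    using M that by (auto intro: row_min_le le_row_max)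
  ultimately show "row_min M i * (1 - n * \<delta>) + \<delta> * (\<Sum>j<n. M $$ (i,j)) \<le> (M * Q) $$ (i,k)"
    and "(M * Q) $$ (i,k) \<le> row_max M i * (1 - n * \<delta>) + \<delta> * (\<Sum>j<n. M $$ (i,j))"
    unfolding index_mult_mat_sum[OF M Q(1) ik]
    using weighted_sum_bounds[of n \<delta> "\<lambda>j. Q $$ (j,k)" "row_min M i" "\<lambda>j. M $$ (i,j)" "row_max M i"] \<delta> ik
    by auto
qed

lemma row_range_mult_nonneg_stochastic:
  assumes M: "M \<in> carrier_mat a n" and Q: "Q \<in> carrier_mat n n" "nonneg_mat Q" "left_stochastic Q"
    and "i < a" "0 < n"
  shows "row_min M i \<le> row_min (M * Q) i" and "row_max (M * Q) i \<le> row_max M i"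
proof -
  have "0 \<le> Q $$ (j,k)" if "j < n" "k < n" for j k using Q that by (auto simp: nonneg_mat_def)
  note bounds = row_bounds_mult_stochastic[OF M Q(1,3) this \<open>i < a\<close>, simplified]
  have dim: "0 < dim_col (M * Q)" "dim_col (M * Q) = n" using Q \<open>0 < n\<close> by auto
  show "row_min M i \<le> row_min (M * Q) i"
    using bounds(1) dim by (cases rule: row_min_attained[OF dim(1), of i]) auto
  show "row_max (M * Q) i \<le> row_max M i"
    using bounds(2) dim by (cases rule: row_max_attained[OF dim(1), of i]) auto
qed

lemma row_oscillation_mult_stochastic:
  assumes M: "M \<in> carrier_mat a n" and Q: "Q \<in> carrier_mat n n" "left_stochastic Q"
    and \<delta>: "\<And>j k. j < n \<Longrightarrow> k < n \<Longrightarrow> \<delta> \<le> Q $$ (j,k)" and "i < a" "0 < n"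
  shows "row_max (M * Q) i - row_min (M * Q) i \<le> (1 - n * \<delta>) * (row_max M i - row_min M i)"
proof -
  note bounds = row_bounds_mult_stochastic[OF M Q \<delta> \<open>i < a\<close>]
  have dim: "0 < dim_col (M * Q)" "dim_col (M * Q) = n" using Q \<open>0 < n\<close> by auto
  obtain kmax where "kmax < n" "row_max (M * Q) i = (M * Q) $$ (i,kmax)"
    using row_max_attained[OF dim(1)] dim(2) by metis
  moreover obtain kmin where "kmin < n" "row_min (M * Q) i = (M * Q) $$ (i,kmin)"
    using row_min_attained[OF dim(1)] dim(2) by metis
  ultimately show ?thesis using bounds(2)[of kmax] bounds(1)[of kmin] by (simp add: algebra_simps)
qed

lemma primitive_stochastic_pow_rows_converge:
  assumes P: "P \<in> carrier_mat n n" and "0 < n" "primitive_mat P" "left_stochastic P"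
  shows "\<exists>\<pi>. \<forall>i<n. \<forall>k<n. (\<lambda>t. (P ^\<^sub>m t) $$ (i,k)) \<longlonglongrightarrow> \<pi> i"
proof -
  have nonneg: "nonneg_mat P" using assms by (simp add: primitive_mat_def)
  obtain m0 where pos: "\<And>j k. j < n \<Longrightarrow> k < n \<Longrightarrow> 0 < (P ^\<^sub>m m0) $$ (j,k)"
    using assms unfolding primitive_mat_def by auto
  define \<delta> where "\<delta> = Min ((\<lambda>(j,k). (P ^\<^sub>m m0) $$ (j,k)) ` ({..<n} \<times> {..<n}))"
  have \<delta>_le: "\<delta> \<le> (P ^\<^sub>m m0) $$ (j,k)" if "j < n" "k < n" for j k
    unfolding \<delta>_def using that by (intro Min_le) auto
  have "\<delta> \<in> (\<lambda>(j,k). (P ^\<^sub>m m0) $$ (j,k)) ` ({..<n} \<times> {..<n})"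
    unfolding \<delta>_def using \<open>0 < n\<close> by (intro Min_in) auto
  then have "0 < \<delta>" using pos by force
  have "\<exists>L. \<forall>k<n. (\<lambda>t. (P ^\<^sub>m t) $$ (i,k)) \<longlonglongrightarrow> L" if "i < n" for i
  proof -
    define hi where "hi t = row_max (P ^\<^sub>m t) i" for t
    define lo where "lo t = row_min (P ^\<^sub>m t) i" for t
    note range = row_range_mult_nonneg_stochastic[OF pow_carrier_mat[OF P] P nonneg \<open>left_stochastic P\<close> that \<open>0 < n\<close>]
    have mono: "decseq hi" "incseq lo"
      unfolding hi_def lo_def using range by (auto intro: decseq_SucI incseq_SucI)
    have lo_hi: "lo t \<le> (P ^\<^sub>m t) $$ (i,k)" "(P ^\<^sub>m t) $$ (i,k) \<le> hi t" if "k < n" for t k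
      unfolding hi_def lo_def using P that by (auto intro: row_min_le le_row_max)
    then have "lo t \<le> hi t" for t using lo_hi[OF \<open>0 < n\<close>, of t] by linarith
    moreover have "1 - n * \<delta> < 1" using \<open>0 < n\<close> \<open>0 < \<delta>\<close> by simp
    moreover have "hi (t + m0) - lo (t + m0) \<le> (1 - n * \<delta>) * (hi t - lo t)" for t
      unfolding hi_def lo_def pow_mat_add[OF P]
      by (rule row_oscillation_mult_stochastic[OF pow_carrier_mat[OF P] pow_carrier_mat[OF P]
            left_stochastic_pow[OF P \<open>left_stochastic P\<close>] \<delta>_le \<open>i < n\<close> \<open>0 < n\<close>])
    ultimately obtain L where L: "hi \<longlonglongrightarrow> L" "lo \<longlonglongrightarrow> L"
      by (rule contracting_brackets_converge[OF mono])
    have "(\<lambda>t. (P ^\<^sub>m t) $$ (i,k)) \<longlonglongrightarrow> L" if "k < n" for k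
      by (rule tendsto_sandwich[OF _ _ L(2,1)]) (use lo_hi[OF that] in auto)
    then show ?thesis by blast
  qed
  then have "\<forall>i\<in>{..<n}. \<exists>L. \<forall>k<n. (\<lambda>t. (P ^\<^sub>m t) $$ (i,k)) \<longlonglongrightarrow> L" by blast
  then obtain \<pi> where "\<forall>i\<in>{..<n}. \<forall>k<n. (\<lambda>t. (P ^\<^sub>m t) $$ (i,k)) \<longlonglongrightarrow> \<pi> i"
    by (auto dest: bchoice)
  then show ?thesis by auto
qed

lemma row_limit_fixed:
  fixes P :: "real mat"
  assumes P: "P \<in> carrier_mat n n" and "0 < n"
    and lim: "\<And>i k. i < n \<Longrightarrow> k < n \<Longrightarrow> (\<lambda>t. (P ^\<^sub>m t) $$ (i,k)) \<longlonglongrightarrow> \<pi> i" and "i < n"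
  shows "\<pi> i = (\<Sum>j<n. (P ^\<^sub>m s) $$ (i,j) * \<pi> j)"
proof -
  have "(P ^\<^sub>m (s + t)) $$ (i,0) = (\<Sum>j<n. (P ^\<^sub>m s) $$ (i,j) * (P ^\<^sub>m t) $$ (j,0))" for t
    unfolding pow_mat_add[OF P] using P assms by (intro index_mult_mat_sum) auto
  moreover have "(\<lambda>t. \<Sum>j<n. (P ^\<^sub>m s) $$ (i,j) * (P ^\<^sub>m t) $$ (j,0)) \<longlonglongrightarrow> (\<Sum>j<n. (P ^\<^sub>m s) $$ (i,j) * \<pi> j)"
    by (rule tendsto_sum, rule tendsto_mult) (use lim \<open>0 < n\<close> in auto)
  ultimately have "(\<lambda>t. (P ^\<^sub>m (t + s)) $$ (i,0)) \<longlonglongrightarrow> (\<Sum>j<n. (P ^\<^sub>m s) $$ (i,j) * \<pi> j)"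
    by (simp add: add.commute)
  moreover have "(\<lambda>t. (P ^\<^sub>m (t + s)) $$ (i,0)) \<longlonglongrightarrow> \<pi> i"
    using LIMSEQ_ignore_initial_segment[OF lim[OF \<open>i < n\<close> \<open>0 < n\<close>]] .
  ultimately show ?thesis using LIMSEQ_unique by blast
qed

lemma fixed_vec_eq_row_limit:
  fixes P :: "real mat"
  assumes P: "P \<in> carrier_mat n n"
    and lim: "\<And>i k. i < n \<Longrightarrow> k < n \<Longrightarrow> (\<lambda>t. (P ^\<^sub>m t) $$ (i,k)) \<longlonglongrightarrow> \<pi> i"
    and p: "p \<in> carrier_vec n" "P *\<^sub>v p = p" "(\<Sum>j<n. p $ j) = 1" and "i < n"
  shows "p $ i = \<pi> i"
proof -
  have "p $ i = (\<Sum>j<n. (P ^\<^sub>m t) $$ (i,j) * p $ j)" for t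
    using pow_mat_fixed_vec[OF P p(1,2)] index_mult_mat_vec_sum[OF pow_carrier_mat[OF P] p(1) \<open>i < n\<close>]
    by simp
  moreover have "(\<lambda>t. \<Sum>j<n. (P ^\<^sub>m t) $$ (i,j) * p $ j) \<longlonglongrightarrow> (\<Sum>j<n. \<pi> i * p $ j)"
    by (rule tendsto_sum, rule tendsto_mult) (use lim \<open>i < n\<close> in auto)
  ultimately show ?thesis using p(3) by (simp add: sum_distrib_left[symmetric] LIMSEQ_const_iff)
qed

lemma row_limit_positive_distribution:
  assumes P: "P \<in> carrier_mat n n" and "0 < n" "primitive_mat P" "left_stochastic P"
    and lim: "\<And>i k. i < n \<Longrightarrow> k < n \<Longrightarrow> (\<lambda>t. (P ^\<^sub>m t) $$ (i,k)) \<longlonglongrightarrow> \<pi> i"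
  shows "(\<Sum>j<n. \<pi> j) = 1" and "\<And>i. i < n \<Longrightarrow> 0 < \<pi> i"
proof -
  have nonneg: "nonneg_mat (P ^\<^sub>m t)" for t
    using nonneg_mat_pow[OF P] assms by (simp add: primitive_mat_def)
  obtain m0 where pos: "\<And>j k. j < n \<Longrightarrow> k < n \<Longrightarrow> 0 < (P ^\<^sub>m m0) $$ (j,k)"
    using P \<open>primitive_mat P\<close> unfolding primitive_mat_def by auto
  have \<pi>_nonneg: "0 \<le> \<pi> j" if "j < n" for j
    using lim[OF that \<open>0 < n\<close>] nonneg P that \<open>0 < n\<close> by (intro LIMSEQ_le_const) (auto simp: nonneg_mat_def)
  have "(\<lambda>t. \<Sum>j<n. (P ^\<^sub>m t) $$ (j,0)) \<longlonglongrightarrow> (\<Sum>j<n. \<pi> j)"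
    by (rule tendsto_sum) (use lim \<open>0 < n\<close> in auto)
  moreover have "(\<Sum>j<n. (P ^\<^sub>m t) $$ (j,0)) = 1" for t
    using left_stochastic_pow[OF P \<open>left_stochastic P\<close>, of t] P \<open>0 < n\<close> by (simp add: left_stochastic_def)
  ultimately show \<pi>_sum: "(\<Sum>j<n. \<pi> j) = 1" by (simp add: LIMSEQ_const_iff)
  obtain j0 where j0: "j0 < n" "0 < \<pi> j0"
  proof -
    have "\<not> (\<forall>j<n. \<pi> j \<le> 0)"
    proof
      assume "\<forall>j<n. \<pi> j \<le> 0"
      then have "(\<Sum>j<n. \<pi> j) \<le> 0" by (intro sum_nonpos) auto
      then show False using \<pi>_sum by simp
    qed
    then show ?thesis using that by (auto simp: not_le)
  qed
  show "0 < \<pi> i" if "i < n" for i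
  proof -
    have "0 < (P ^\<^sub>m m0) $$ (i,j0) * \<pi> j0" using pos[OF that j0(1)] j0(2) by simp
    also have "\<dots> \<le> (\<Sum>j<n. (P ^\<^sub>m m0) $$ (i,j) * \<pi> j)"
      using j0 nonneg P that \<pi>_nonneg
      by (intro member_le_sum[of j0 "{..<n}" "\<lambda>j. (P ^\<^sub>m m0) $$ (i,j) * \<pi> j"]) (auto simp: nonneg_mat_def)
    finally show ?thesis using row_limit_fixed[OF P \<open>0 < n\<close> lim that, of m0] by simp
  qed
qed

lemma perron_vec_eq_row_limit:
  assumes P: "P \<in> carrier_mat n n" and "0 < n" "primitive_mat P" "left_stochastic P"
    and lim: "\<And>i k. i < n \<Longrightarrow> k < n \<Longrightarrow> (\<lambda>t. (P ^\<^sub>m t) $$ (i,k)) \<longlonglongrightarrow> \<pi> i"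
  shows "perron_vec P = vec n \<pi>"
proof -
  note \<pi>_sum = row_limit_positive_distribution(1)[OF assms]
    and \<pi>_pos = row_limit_positive_distribution(2)[OF assms]
  have fixed: "P *\<^sub>v vec n \<pi> = vec n \<pi>"
  proof (rule eq_vecI)
    fix i assume "i < dim_vec (vec n \<pi>)"
    then have "i < n" by simp
    then show "(P *\<^sub>v vec n \<pi>) $ i = vec n \<pi> $ i"
      using index_mult_mat_vec_sum[OF P _ \<open>i < n\<close>, of "vec n \<pi>"] row_limit_fixed[OF P \<open>0 < n\<close> lim \<open>i < n\<close>, of 1] P
      by simp
  qed (use P in simp)
  show ?thesis
    unfolding perron_vec_def
  proof (rule the_equality)
    show "vec n \<pi> \<in> carrier_vec (dim_row P) \<and> P *\<^sub>v vec n \<pi> = vec n \<pi> \<and>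
        (\<Sum>i<dim_vec (vec n \<pi>). vec n \<pi> $ i) = 1 \<and> (\<forall>i<dim_vec (vec n \<pi>). 0 < vec n \<pi> $ i)"
      using P fixed \<pi>_sum \<pi>_pos by simp
  next
    fix p assume "p \<in> carrier_vec (dim_row P) \<and> P *\<^sub>v p = p \<and> (\<Sum>i<dim_vec p. p $ i) = 1 \<and> (\<forall>i<dim_vec p. 0 < p $ i)"
    then have "p \<in> carrier_vec n" "P *\<^sub>v p = p" "(\<Sum>j<n. p $ j) = 1" using P by auto
    then show "p = vec n \<pi>" using fixed_vec_eq_row_limit[OF P lim] by (intro eq_vecI) auto
  qed
qed

lemma primitive_stochastic_pow_tendsto:
  assumes P: "P \<in> carrier_mat n n" and "0 < n" "primitive_mat P" "left_stochastic P"
  shows "mat_tendsto (\<lambda>t. P ^\<^sub>m t) (perron_block P)"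
proof -
  obtain \<pi> where lim: "\<And>i k. i < n \<Longrightarrow> k < n \<Longrightarrow> (\<lambda>t. (P ^\<^sub>m t) $$ (i,k)) \<longlonglongrightarrow> \<pi> i"
    using primitive_stochastic_pow_rows_converge[OF assms] by auto
  then show ?thesis
    using perron_vec_eq_row_limit[OF assms lim] P by (auto simp: mat_tendsto_def perron_block_def)
qed

lemma sum_lessThan_add: "(\<Sum>i<a + b. f i) = (\<Sum>i<a. f i) + (\<Sum>i<b. f (a + i))"
  for f :: "nat \<Rightarrow> 'a :: comm_monoid_add"
  by (induct b) (auto simp: ac_simps)

lemma diag_block_mat_carrier:
  assumes "\<forall>B\<in>set Bs. square_mat B"
  shows "diag_block_mat Bs \<in> carrier_mat (sum_list (map dim_row Bs)) (sum_list (map dim_row Bs))"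
proof -
  have "map dim_col Bs = map dim_row Bs" using assms by (induct Bs) auto
  then have "sum_list (map dim_col Bs) = sum_list (map dim_row Bs)" by metis
  then show ?thesis using dim_diag_block_mat[of Bs] unfolding carrier_mat_def by simp
qed

lemma diag_block_mat_Cons_four_block:
  assumes "B \<in> carrier_mat n n" "diag_block_mat Bs \<in> carrier_mat N N"
  shows "diag_block_mat (B # Bs) = four_block_mat B (0\<^sub>m n N) (0\<^sub>m N n) (diag_block_mat Bs)"
  using carrier_matD[OF assms(1)] carrier_matD[OF assms(2)] by (simp only: diag_block_mat.simps Let_def)

lemma col_sum_four_block_left:
  assumes "A \<in> carrier_mat r1 c1" "D \<in> carrier_mat r2 c2" "k < c1"
  shows "col_sum (four_block_mat A B (0\<^sub>m r2 c1) D) k = col_sum A k"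
  using carrier_matD[OF assms(1)] carrier_matD[OF assms(2)] assms(3)
  by (simp add: col_sum_def sum_lessThan_add)

lemma col_sum_four_block_right:
  assumes "A \<in> carrier_mat r1 c1" "B \<in> carrier_mat r1 c2" "D \<in> carrier_mat r2 c2" "k < c2"
  shows "col_sum (four_block_mat A B (0\<^sub>m r2 c1) D) (c1 + k) = col_sum B k + col_sum D k"
  using carrier_matD[OF assms(1)] carrier_matD[OF assms(2)] carrier_matD[OF assms(3)] assms(4)
  by (simp add: col_sum_def sum_lessThan_add)

lemma col_sum_zero [simp]: "k < m \<Longrightarrow> col_sum (0\<^sub>m n m) k = 0"
  by (simp add: col_sum_def)

lemma left_stochastic_four_block_diag:
  assumes A: "A \<in> carrier_mat a a" and D: "D \<in> carrier_mat d d"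
    and stoch: "left_stochastic (four_block_mat A (0\<^sub>m a d) (0\<^sub>m d a) D)"
  shows "left_stochastic A" and "left_stochastic D"
proof -
  have col1: "col_sum (four_block_mat A (0\<^sub>m a d) (0\<^sub>m d a) D) k = 1" if "k < a + d" for k
    using stoch that carrier_matD[OF A] carrier_matD[OF D] by (simp add: left_stochastic_iff_col_sum)
  show "left_stochastic A"
    unfolding left_stochastic_iff_col_sum
  proof (intro allI impI)
    fix k assume "k < dim_col A"
    then have "k < a" using A by simp
    then show "col_sum A k = 1" using col1[of k] col_sum_four_block_left[OF A D, of k "0\<^sub>m a d"] by simp
  qed
  show "left_stochastic D"
    unfolding left_stochastic_iff_col_sum
  proof (intro allI impI)
    fix k assume "k < dim_col D"
    then have "k < d" using D by simp
    then show "col_sum D k = 1"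
      using col1[of "a + k"] col_sum_four_block_right[OF A zero_carrier_mat D, of k] by simp
  qed
qed

lemma diag_block_mat_Cons_pow:
  assumes B: "B \<in> carrier_mat n n" and sq: "\<forall>C\<in>set Bs. square_mat C"
  shows "diag_block_mat (B # Bs) ^\<^sub>m t = four_block_mat (B ^\<^sub>m t)
    (0\<^sub>m n (sum_list (map dim_row Bs))) (0\<^sub>m (sum_list (map dim_row Bs)) n) (diag_block_mat Bs ^\<^sub>m t)"
proof -
  have D: "diag_block_mat Bs \<in> carrier_mat (sum_list (map dim_row Bs)) (sum_list (map dim_row Bs))"
    by (rule diag_block_mat_carrier[OF sq])
  have "diag_block_mat (B # Bs) ^\<^sub>m t = diag_block_mat (B ^\<^sub>m t # map (\<lambda>C. C ^\<^sub>m t) Bs)"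
    using diag_block_pow_mat[of "B # Bs"] B sq by auto
  also have "\<dots> = four_block_mat (B ^\<^sub>m t)
      (0\<^sub>m n (sum_list (map dim_row Bs))) (0\<^sub>m (sum_list (map dim_row Bs)) n) (diag_block_mat Bs ^\<^sub>m t)"
    unfolding diag_block_pow_mat[OF sq]
    by (rule diag_block_mat_Cons_four_block[OF pow_carrier_mat[OF B]
          pow_carrier_mat[OF D, of t, unfolded diag_block_pow_mat[OF sq]]])
  finally show ?thesis .
qed

lemma diag_block_primitive_stochastic_pow_tendsto:
  assumes "\<forall>B\<in>set Bs. 0 < dim_row B \<and> primitive_mat B" "left_stochastic (diag_block_mat Bs)"
  shows "mat_tendsto (\<lambda>t. diag_block_mat Bs ^\<^sub>m t) (diag_block_mat (map perron_block Bs))"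
  using assms
proof (induct Bs)
  case Nil
  then show ?case by (simp add: mat_tendsto_def)
next
  case (Cons B Bs)
  let ?n = "dim_row B" and ?N = "sum_list (map dim_row Bs)"
  have sq: "\<forall>C\<in>set (B # Bs). square_mat C" using Cons.prems by (auto simp: primitive_mat_def)
  have B: "B \<in> carrier_mat ?n ?n" and sqBs: "\<forall>C\<in>set Bs. square_mat C" using sq by auto
  have D: "diag_block_mat Bs \<in> carrier_mat ?N ?N" by (rule diag_block_mat_carrier[OF sqBs])
  have PB: "perron_block B \<in> carrier_mat ?n ?n" by (simp add: perron_block_def)
  have PD: "diag_block_mat (map perron_block Bs) \<in> carrier_mat ?N ?N"
    using diag_block_mat_carrier[of "map perron_block Bs"] by (simp add: perron_block_def o_def)
  note stoch = left_stochastic_four_block_diag[OF B D,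
      folded diag_block_mat_Cons_four_block[OF B D], OF Cons.prems(2)]
  have limB: "mat_tendsto (\<lambda>t. B ^\<^sub>m t) (perron_block B)"
    using Cons.prems(1) stoch(1) by (intro primitive_stochastic_pow_tendsto[OF B]) auto
  have limD: "mat_tendsto (\<lambda>t. diag_block_mat Bs ^\<^sub>m t) (diag_block_mat (map perron_block Bs))"
    using Cons.hyps Cons.prems(1) stoch(2) by simp
  have "mat_tendsto (\<lambda>t. four_block_mat (B ^\<^sub>m t) (0\<^sub>m ?n ?N) (0\<^sub>m ?N ?n) (diag_block_mat Bs ^\<^sub>m t))
      (four_block_mat (perron_block B) (0\<^sub>m ?n ?N) (0\<^sub>m ?N ?n) (diag_block_mat (map perron_block Bs)))"
    by (rule mat_tendsto_four_block[OF pow_carrier_mat[OF B] pow_carrier_mat[OF D] PB zero_carrier_mat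
          zero_carrier_mat PD limB mat_tendsto_const mat_tendsto_const limD])
  then show ?case
    unfolding diag_block_mat_Cons_pow[OF B sqBs] using diag_block_mat_Cons_four_block[OF PB PD] by simp
qed

section \<open>Substochastic matrices whose columns leak\<close>

definition substochastic :: "real mat \<Rightarrow> bool" where
  "substochastic M \<longleftrightarrow> nonneg_mat M \<and> (\<forall>k<dim_col M. col_sum M k \<le> 1)"

lemma col_sum_nonneg: "nonneg_mat M \<Longrightarrow> k < dim_col M \<Longrightarrow> 0 \<le> col_sum M k"
  unfolding col_sum_def by (intro sum_nonneg) (auto simp: nonneg_mat_def)

lemma col_sum_mult_substochastic_le:
  assumes A: "A \<in> carrier_mat n n" "substochastic A" and B: "B \<in> carrier_mat n m" "nonneg_mat B"
    and "k < m"
  shows "col_sum (A * B) k \<le> col_sum B k"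
proof -
  have "col_sum (A * B) k = (\<Sum>j<n. col_sum A j * B $$ (j,k))"
    by (rule col_sum_mult[OF A(1) B(1) \<open>k < m\<close>])
  also have "\<dots> \<le> (\<Sum>j<n. B $$ (j,k))"
  proof (rule sum_mono)
    fix j assume "j \<in> {..<n}"
    then show "col_sum A j * B $$ (j,k) \<le> B $$ (j,k)"
      using A B \<open>k < m\<close> col_sum_nonneg[of A j]
      by (intro mult_left_le_one_le) (auto simp: substochastic_def nonneg_mat_def)
  qed
  finally show ?thesis using B by (simp add: col_sum_def)
qed

lemma col_sum_mult_substochastic_less:
  assumes A: "A \<in> carrier_mat n n" "substochastic A" and B: "B \<in> carrier_mat n m" "nonneg_mat B"
    and "k < m" "j < n" "col_sum A j < 1" "0 < B $$ (j,k)"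
  shows "col_sum (A * B) k < col_sum B k"
proof -
  have "col_sum (A * B) k = (\<Sum>j<n. col_sum A j * B $$ (j,k))"
    by (rule col_sum_mult[OF A(1) B(1) \<open>k < m\<close>])
  also have "\<dots> < (\<Sum>j<n. B $$ (j,k))"
  proof (rule sum_strict_mono_ex1)
    show "\<forall>i\<in>{..<n}. col_sum A i * B $$ (i,k) \<le> B $$ (i,k)"
      using A B \<open>k < m\<close> col_sum_nonneg[of A]
      by (auto intro!: mult_left_le_one_le simp: substochastic_def nonneg_mat_def)
    show "\<exists>i\<in>{..<n}. col_sum A i * B $$ (i,k) < B $$ (i,k)"
      using assms(6-8) by (intro bexI[of _ j]) auto
  qed simp
  finally show ?thesis using B by (simp add: col_sum_def)
qed

lemma substochastic_pow:
  assumes T: "T \<in> carrier_mat n n" "substochastic T"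
  shows "substochastic (T ^\<^sub>m t)"
proof (induct t)
  case 0
  then show ?case by (simp add: substochastic_def nonneg_mat_def col_sum_one)
next
  case (Suc t)
  have T0: "nonneg_mat T" using T(2) by (simp add: substochastic_def)
  have "col_sum (T ^\<^sub>m t * T) k \<le> 1" if "k < n" for k
    using col_sum_mult_substochastic_le[OF pow_carrier_mat[OF T(1)] Suc T(1) T0 that] T that
    by (auto simp: substochastic_def)
  then show ?case
    using nonneg_mat_mult[OF pow_carrier_mat[OF T(1)] T(1)] Suc T0 T(1)
    by (simp add: substochastic_def)
qed

definition leaky_col :: "real mat \<Rightarrow> nat \<Rightarrow> bool" where
  "leaky_col T k \<longleftrightarrow> (\<exists>t. col_sum (T ^\<^sub>m t) k < 1)"

lemma leaky_col_propagate:
  assumes T: "T \<in> carrier_mat n n" "substochastic T"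
    and "leaky_col T j" "j < n" "k < n" "0 < (T ^\<^sub>m s) $$ (j,k)"
  shows "leaky_col T k"
proof -
  obtain t where t: "col_sum (T ^\<^sub>m t) j < 1" using \<open>leaky_col T j\<close> by (auto simp: leaky_col_def)
  have sub: "substochastic (T ^\<^sub>m r)" for r by (rule substochastic_pow[OF T])
  then have "nonneg_mat (T ^\<^sub>m s)" by (simp add: substochastic_def)
  then have "col_sum (T ^\<^sub>m (t + s)) k < col_sum (T ^\<^sub>m s) k"
    unfolding pow_mat_add[OF T(1)] using assms(4-6) t
    by (intro col_sum_mult_substochastic_less[OF pow_carrier_mat[OF T(1)] sub pow_carrier_mat[OF T(1)]])
  also have "\<dots> \<le> 1" using sub[of s] T(1) \<open>k < n\<close> by (simp add: substochastic_def)
  finally show ?thesis unfolding leaky_col_def by blast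
qed

lemma leaky_cols_uniform_col_sum_bound:
  assumes T: "T \<in> carrier_mat n n" "substochastic T" and "0 < n"
    and leaky: "\<And>k. k < n \<Longrightarrow> leaky_col T k"
  obtains m q where "q < 1" "\<And>k. k < n \<Longrightarrow> col_sum (T ^\<^sub>m m) k \<le> q"
proof -
  have antimono: "col_sum (T ^\<^sub>m (t + s)) k \<le> col_sum (T ^\<^sub>m s) k" if "k < n" for t s k
    unfolding pow_mat_add[OF T(1)]
    using substochastic_pow[OF T] pow_carrier_mat[OF T(1)] that
    by (intro col_sum_mult_substochastic_le) (auto simp: substochastic_def)
  obtain tk where tk: "\<And>k. k < n \<Longrightarrow> col_sum (T ^\<^sub>m tk k) k < 1"
    using leaky unfolding leaky_col_def by metis
  define m where "m = Max (tk ` {..<n})"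
  have below_1: "col_sum (T ^\<^sub>m m) k < 1" if "k < n" for k
  proof -
    have "tk k \<le> m" unfolding m_def using that by (intro Max_ge) auto
    then have "col_sum (T ^\<^sub>m m) k = col_sum (T ^\<^sub>m ((m - tk k) + tk k)) k" by simp
    then show ?thesis using antimono[OF that, of "m - tk k" "tk k"] tk[OF that] by linarith
  qed
  define q where "q = Max ((\<lambda>k. col_sum (T ^\<^sub>m m) k) ` {..<n})"
  have "q \<in> (\<lambda>k. col_sum (T ^\<^sub>m m) k) ` {..<n}" unfolding q_def using \<open>0 < n\<close> by (intro Max_in) auto
  then have "q < 1" using below_1 by auto
  moreover have "col_sum (T ^\<^sub>m m) k \<le> q" if "k < n" for k unfolding q_def using that by (intro Max_ge) auto
  ultimately show ?thesis using that by blast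
qed

lemma pow_tendsto_zero_if_col_sums_contract:
  assumes T: "T \<in> carrier_mat n n" "substochastic T"
    and "q < 1" and contract: "\<And>k. k < n \<Longrightarrow> col_sum (T ^\<^sub>m m) k \<le> q"
  shows "mat_tendsto (\<lambda>t. T ^\<^sub>m t) (0\<^sub>m n n)"
proof (cases "n = 0")
  case True
  then show ?thesis by (simp add: mat_tendsto_def)
next
  case False
  define c where "c t k = col_sum (T ^\<^sub>m t) k" for t k
  have sub: "substochastic (T ^\<^sub>m t)" for t by (rule substochastic_pow[OF T])
  then have nonneg: "nonneg_mat (T ^\<^sub>m t)" for t by (simp add: substochastic_def)
  have c_nonneg: "0 \<le> c t k" if "k < n" for t k
    unfolding c_def using col_sum_nonneg[OF nonneg] T(1) that by simp
  have c_mult: "c (t + s) k = (\<Sum>j<n. c t j * (T ^\<^sub>m s) $$ (j,k))" if "k < n" for t s k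
    unfolding c_def pow_mat_add[OF T(1)] by (rule col_sum_mult) (use T(1) that in auto)
  define g where "g t = Max ((\<lambda>k. c t k) ` {..<n})" for t
  have c_le_g: "c t k \<le> g t" if "k < n" for t k unfolding g_def using that by (intro Max_ge) auto
  have g_attained: "\<exists>k<n. g t = c t k" for t
  proof -
    have "g t \<in> (\<lambda>k. c t k) ` {..<n}" unfolding g_def using False by (intro Max_in) auto
    then show ?thesis by auto
  qed
  have g_nonneg: "0 \<le> g t" for t using g_attained[of t] c_nonneg by auto
  have "decseq g"
  proof (rule decseq_SucI)
    fix t
    obtain k where "k < n" "g (Suc t) = c (1 + t) k" using g_attained[of "Suc t"] by auto
    moreover have "c (1 + t) k \<le> c t k"
      unfolding c_def pow_mat_add[OF T(1)]
      by (rule col_sum_mult_substochastic_le[OF pow_carrier_mat[OF T(1)] sub pow_carrier_mat[OF T(1)] nonneg \<open>k < n\<close>])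
    ultimately show "g (Suc t) \<le> g t" using c_le_g[of k t] by linarith
  qed
  moreover have "g (t + m) \<le> q * g t" for t
  proof -
    obtain k where k: "k < n" "g (t + m) = c (t + m) k" using g_attained[of "t + m"] by auto
    have "c (t + m) k \<le> (\<Sum>j<n. g t * (T ^\<^sub>m m) $$ (j,k))"
      unfolding c_mult[OF k(1)] using c_le_g nonneg T(1) k(1)
      by (intro sum_mono mult_right_mono) (auto simp: nonneg_mat_def)
    also have "\<dots> = g t * c m k" unfolding c_def col_sum_def using T(1) by (simp add: sum_distrib_left)
    also have "\<dots> \<le> g t * q" using contract[OF k(1)] g_nonneg unfolding c_def by (intro mult_left_mono) auto
    finally show ?thesis using k(2) by (simp add: mult.commute)
  qed
  ultimately obtain L where "g \<longlonglongrightarrow> L" "(\<lambda>t. 0) \<longlonglongrightarrow> L"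
    using contracting_brackets_converge[of g "\<lambda>t. 0" q m] g_nonneg \<open>q < 1\<close> by auto
  then have g0: "g \<longlonglongrightarrow> 0" using LIMSEQ_const_iff by metis
  have "(\<lambda>t. (T ^\<^sub>m t) $$ (i,k)) \<longlonglongrightarrow> 0" if "i < n" "k < n" for i k
  proof (rule tendsto_sandwich[OF _ _ tendsto_const g0])
    show "\<forall>\<^sub>F t in sequentially. 0 \<le> (T ^\<^sub>m t) $$ (i,k)"
      using nonneg T(1) that by (simp add: nonneg_mat_def)
    have "(T ^\<^sub>m t) $$ (i,k) \<le> c t k" for t
      unfolding c_def using nonneg_mat_entry_le_col_sum[OF nonneg] T(1) that by simp
    then have "(T ^\<^sub>m t) $$ (i,k) \<le> g t" for t using c_le_g[OF that(2), of t] order_trans by blast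
    then show "\<forall>\<^sub>F t in sequentially. (T ^\<^sub>m t) $$ (i,k) \<le> g t" by simp
  qed
  then show ?thesis by (simp add: mat_tendsto_def)
qed

lemma pow_tendsto_zero_if_cols_leaky:
  assumes T: "T \<in> carrier_mat n n" "substochastic T"
    and leaky: "\<And>k. k < n \<Longrightarrow> leaky_col T k"
  shows "mat_tendsto (\<lambda>t. T ^\<^sub>m t) (0\<^sub>m n n)"
proof (cases "n = 0")
  case True
  then show ?thesis by (simp add: mat_tendsto_def)
next
  case False
  then obtain m q where "q < 1" "\<And>k. k < n \<Longrightarrow> col_sum (T ^\<^sub>m m) k \<le> q"
    using leaky_cols_uniform_col_sum_bound[OF T _ leaky] by blast
  then show ?thesis by (rule pow_tendsto_zero_if_col_sums_contract[OF T])
qed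

lemma blk_off_Suc: "r < length Ns \<Longrightarrow> blk_off Ns (Suc r) = blk_off Ns r + Ns ! r"
  unfolding blk_off_def by (simp add: take_Suc_conv_app_nth)

lemma blk_off_le: "blk_off Ns r \<le> sum_list Ns"
proof -
  have "sum_list Ns = sum_list (take r Ns) + sum_list (drop r Ns)"
    by (metis append_take_drop_id sum_list_append)
  then show ?thesis unfolding blk_off_def by simp
qed

lemma blk_end: "r < length Ns \<Longrightarrow> blk_off Ns r + Ns ! r \<le> sum_list Ns"
  using blk_off_Suc[of r Ns] blk_off_le[of Ns "Suc r"] by simp

lemma blk_cover: "k < sum_list Ns \<Longrightarrow> \<exists>r<length Ns. \<exists>a<Ns ! r. k = blk_off Ns r + a"
proof (induct Ns arbitrary: k)
  case Nil
  then show ?case by simp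
next
  case (Cons n Ns)
  show ?case
  proof (cases "k < n")
    case True
    then show ?thesis by (intro exI[of _ 0]) (auto simp: blk_off_def)
  next
    case False
    then have "k - n < sum_list Ns" using Cons.prems by simp
    then obtain r a where "r < length Ns" "a < Ns ! r" "k - n = blk_off Ns r + a"
      using Cons.hyps by blast
    then show ?thesis using False by (intro exI[of _ "Suc r"]) (auto simp: blk_off_def)
  qed
qed

lemma principal_submatrix_pow_le:
  assumes M: "M \<in> carrier_mat N N" "nonneg_mat M" and "off + len \<le> N" "i < len" "k < len"
  shows "(mat len len (\<lambda>(i,k). M $$ (off + i, off + k)) ^\<^sub>m m) $$ (i,k) \<le> (M ^\<^sub>m m) $$ (off + i, off + k)"
  using assms(4,5)
proof (induct m arbitrary: k)
  case 0
  then show ?case using M \<open>off + len \<le> N\<close> by simp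
next
  case (Suc m)
  let ?B = "mat len len (\<lambda>(i,k). M $$ (off + i, off + k))"
  have B: "?B \<in> carrier_mat len len" by simp
  have "nonneg_mat ?B" using M \<open>off + len \<le> N\<close> by (auto simp: nonneg_mat_def)
  note nonneg_B = nonneg_matD[OF nonneg_mat_pow[OF B this, of m]]
  note nonneg_M = nonneg_matD[OF nonneg_mat_pow[OF M, of m]] nonneg_matD[OF M(2)]
  have "(?B ^\<^sub>m Suc m) $$ (i,k) = (\<Sum>j<len. (?B ^\<^sub>m m) $$ (i,j) * ?B $$ (j,k))"
    unfolding pow_mat.simps by (rule index_mult_mat_sum[OF pow_carrier_mat[OF B] B Suc.prems])
  also have "\<dots> \<le> (\<Sum>j<len. (M ^\<^sub>m m) $$ (off + i, off + j) * M $$ (off + j, off + k))"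
  proof (rule sum_mono)
    fix j assume "j \<in> {..<len}"
    then have "?B $$ (j,k) = M $$ (off + j, off + k)" using Suc.prems by simp
    then show "(?B ^\<^sub>m m) $$ (i,j) * ?B $$ (j,k) \<le> (M ^\<^sub>m m) $$ (off + i, off + j) * M $$ (off + j, off + k)"
      using \<open>j \<in> {..<len}\<close> Suc.hyps[of j] nonneg_M(2)[of "off + j" "off + k"] M(1) \<open>off + len \<le> N\<close> Suc.prems
      by (auto intro!: mult_right_mono)
  qed
  also have "\<dots> \<le> (\<Sum>j<off + len. (M ^\<^sub>m m) $$ (off + i, j) * M $$ (j, off + k))"
    unfolding sum_lessThan_add[where a=off and b=len] using nonneg_M M(1) \<open>off + len \<le> N\<close> Suc.prems
    by (auto intro!: sum_nonneg)
  also have "\<dots> \<le> (\<Sum>j<N. (M ^\<^sub>m m) $$ (off + i, j) * M $$ (j, off + k))"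
    using nonneg_M M(1) \<open>off + len \<le> N\<close> Suc.prems by (intro sum_mono2) auto
  also have "\<dots> = (M ^\<^sub>m Suc m) $$ (off + i, off + k)"
    unfolding pow_mat.simps using M(1) \<open>off + len \<le> N\<close> Suc.prems
    by (intro index_mult_mat_sum[symmetric]) auto
  finally show ?case .
qed

text \<open>In a block upper triangular matrix the mass leaving a column of block \<open>r\<close> through rows
  outside block \<open>r\<close> enters an earlier block, so a deficient column of \<open>A\<^sub>r\<close> leaks once all
  earlier blocks do.\<close>

lemma deficient_col_leaky:
  assumes T: "T \<in> carrier_mat N N" "substochastic T" and N: "N = sum_list Ns"
    and tri: "block_upper_tri T Ns" and r: "r < length Ns" "k0 < Ns ! r"
    and deficient: "(\<Sum>i<Ns ! r. diag_blk T Ns r $$ (i,k0)) < 1"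
    and earlier: "\<And>r' a. r' < r \<Longrightarrow> a < Ns ! r' \<Longrightarrow> leaky_col T (blk_off Ns r' + a)"
  shows "leaky_col T (blk_off Ns r + k0)"
proof (cases "col_sum T (blk_off Ns r + k0) < 1")
  case True
  then show ?thesis unfolding leaky_col_def using T(1) by (intro exI[of _ 1]) simp
next
  case False
  let ?o = "blk_off Ns r" and ?K = "blk_off Ns r + k0"
  let ?blk = "(\<lambda>a. ?o + a) ` {..<Ns ! r}"
  have blk_bound: "?o + Ns ! r \<le> N" using blk_end[OF r(1)] N by simp
  have sub: "?blk \<subseteq> {..<N}" using blk_bound by auto
  have K: "?K < N" using blk_bound r(2) by simp
  have "(\<Sum>i\<in>?blk. T $$ (i,?K)) < 1"
    using deficient r(2) by (simp add: sum.reindex inj_on_def diag_blk_def)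
  moreover have "(\<Sum>i<N. T $$ (i,?K)) = (\<Sum>i\<in>?blk. T $$ (i,?K)) + (\<Sum>i\<in>{..<N} - ?blk. T $$ (i,?K))"
    using sum.subset_diff[OF sub] by (simp add: add.commute)
  moreover have "1 \<le> (\<Sum>i<N. T $$ (i,?K))" using False T(1) by (simp add: col_sum_def)
  ultimately have "0 < (\<Sum>i\<in>{..<N} - ?blk. T $$ (i,?K))" by linarith
  then obtain i where i: "i \<in> {..<N} - ?blk" "0 < T $$ (i,?K)"
    by (metis (no_types, lifting) not_le sum_nonpos)
  then obtain r' a where r': "r' < length Ns" "a < Ns ! r'" "i = blk_off Ns r' + a"
    using blk_cover[of i Ns] N by auto
  have "r' \<noteq> r" using i r' by auto
  moreover have "\<not> r < r'"
    using tri r' r(2) i(2) unfolding block_upper_tri_def by auto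
  ultimately have "leaky_col T i" using earlier r' by simp
  then show ?thesis using leaky_col_propagate[OF T _ _ K, of i 1] i T(1) by simp
qed

lemma block_triangular_cols_leaky:
  assumes T: "T \<in> carrier_mat N N" "substochastic T" and N: "N = sum_list Ns"
    and tri: "block_upper_tri T Ns"
    and irr: "\<forall>r<length Ns. irreducible_mat (diag_blk T Ns r)"
    and leak: "\<forall>r<length Ns. \<exists>k<Ns ! r. (\<Sum>i<Ns ! r. diag_blk T Ns r $$ (i,k)) < 1"
    and "k < N"
  shows "leaky_col T k"
proof -
  have "\<forall>a<Ns ! r. leaky_col T (blk_off Ns r + a)" if "r < length Ns" for r
    using that
  proof (induct r rule: less_induct)
    case (less r)
    obtain k0 where k0: "k0 < Ns ! r" "(\<Sum>i<Ns ! r. diag_blk T Ns r $$ (i,k0)) < 1"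
      using leak less.prems by blast
    have blk_bound: "blk_off Ns r + Ns ! r \<le> N" using blk_end[OF less.prems] N by simp
    have K: "leaky_col T (blk_off Ns r + k0)"
      using less by (intro deficient_col_leaky[OF T N tri less.prems k0]) auto
    show ?case
    proof (intro allI impI)
      fix a assume a: "a < Ns ! r"
      have "irreducible_mat (diag_blk T Ns r)" using irr less.prems by blast
      then obtain m where "0 < (diag_blk T Ns r ^\<^sub>m m) $$ (k0,a)"
        using k0(1) a unfolding irreducible_mat_def by (auto simp: diag_blk_def)
      also have "\<dots> \<le> (T ^\<^sub>m m) $$ (blk_off Ns r + k0, blk_off Ns r + a)"
        unfolding diag_blk_def
        by (rule principal_submatrix_pow_le[OF T(1) _ blk_bound k0(1) a]) (use T(2) in \<open>simp add: substochastic_def\<close>)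
      finally show "leaky_col T (blk_off Ns r + a)"
        using leaky_col_propagate[OF T K] blk_bound k0(1) a by simp
    qed
  qed
  then show ?thesis using blk_cover[of k Ns] \<open>k < N\<close> N by auto
qed

section \<open>Invertibility of \<open>I - T\<close>\<close>

lemma fixed_vec_eq_zero_if_pow_tendsto_zero:
  fixes T :: "real mat"
  assumes T: "T \<in> carrier_mat n n" and lim: "mat_tendsto (\<lambda>t. T ^\<^sub>m t) (0\<^sub>m n n)"
    and v: "v \<in> carrier_vec n" "T *\<^sub>v v = v"
  shows "v = 0\<^sub>v n"
proof (rule eq_vecI)
  fix i assume "i < dim_vec (0\<^sub>v n :: real vec)"
  then have "i < n" by simp
  have "v $ i = (\<Sum>j<n. (T ^\<^sub>m t) $$ (i,j) * v $ j)" for t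
    using pow_mat_fixed_vec[OF T v] index_mult_mat_vec_sum[OF pow_carrier_mat[OF T] v(1) \<open>i < n\<close>]
    by simp
  moreover have "(\<lambda>t. \<Sum>j<n. (T ^\<^sub>m t) $$ (i,j) * v $ j) \<longlonglongrightarrow> (\<Sum>j<n. 0 * v $ j)"
    by (rule tendsto_sum, rule tendsto_mult) (use lim \<open>i < n\<close> in \<open>auto simp: mat_tendsto_def\<close>)
  ultimately show "v $ i = 0\<^sub>v n $ i" using \<open>i < n\<close> by (simp add: LIMSEQ_const_iff)
qed (use v in simp)

lemma one_minus_invertible_if_pow_tendsto_zero:
  fixes T :: "real mat"
  assumes T: "T \<in> carrier_mat n n" and lim: "mat_tendsto (\<lambda>t. T ^\<^sub>m t) (0\<^sub>m n n)"
  obtains Inv where "mat_inverse (1\<^sub>m n - T) = Some Inv" "Inv \<in> carrier_mat n n"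
    "Inv * (1\<^sub>m n - T) = 1\<^sub>m n" "invertible_mat (1\<^sub>m n - T)"
proof -
  have M: "1\<^sub>m n - T \<in> carrier_mat n n" using T by (simp add: minus_carrier_mat)
  have det: "det (1\<^sub>m n - T) \<noteq> 0"
  proof
    assume "det (1\<^sub>m n - T) = 0"
    then obtain v where v: "v \<in> carrier_vec n" "v \<noteq> 0\<^sub>v n" "(1\<^sub>m n - T) *\<^sub>v v = 0\<^sub>v n"
      using det_0_iff_vec_prod_zero[OF M] by blast
    have "v - T *\<^sub>v v = 0\<^sub>v n"
      using v(3) minus_mult_distrib_mat_vec[OF one_carrier_mat T v(1)] v(1) by simp
    have "T *\<^sub>v v = v"
    proof (rule eq_vecI)
      fix i assume "i < dim_vec v"
      then have "(v - T *\<^sub>v v) $ i = 0" using \<open>v - T *\<^sub>v v = 0\<^sub>v n\<close> v(1) by simp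
      then show "(T *\<^sub>v v) $ i = v $ i" using \<open>i < dim_vec v\<close> T v(1) by simp
    qed (use T v(1) in simp)
    then show False using fixed_vec_eq_zero_if_pow_tendsto_zero[OF T lim v(1)] v(2) by simp
  qed
  obtain Inv where Inv: "mat_inverse (1\<^sub>m n - T) = Some Inv"
  proof (cases "mat_inverse (1\<^sub>m n - T)")
    case None
    then have "1\<^sub>m n - T \<notin> Units (ring_mat TYPE(real) n ())" by (rule mat_inverse(1)[OF M])
    then show ?thesis using det_non_zero_imp_unit[OF M det] by contradiction
  qed
  then have inverse: "(1\<^sub>m n - T) * Inv = 1\<^sub>m n" "Inv * (1\<^sub>m n - T) = 1\<^sub>m n" "Inv \<in> carrier_mat n n"
    using mat_inverse(2)[OF M] by auto
  have "invertible_mat (1\<^sub>m n - T)"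
    unfolding invertible_mat_def inverts_mat_def
    using inverse carrier_matD[OF M] carrier_matD[OF inverse(3)] by (auto simp: square_mat.simps)
  then show ?thesis using that Inv inverse by blast
qed

section \<open>Powers of a block upper triangular matrix\<close>

primrec pow_corner :: "real mat \<Rightarrow> real mat \<Rightarrow> real mat \<Rightarrow> nat \<Rightarrow> real mat" where
  "pow_corner D S T 0 = 0\<^sub>m (dim_row S) (dim_col S)"
| "pow_corner D S T (Suc n) = D ^\<^sub>m n * S + pow_corner D S T n * T"

lemma pow_corner_carrier:
  assumes "D \<in> carrier_mat a a" "S \<in> carrier_mat a b" "T \<in> carrier_mat b b"
  shows "pow_corner D S T n \<in> carrier_mat a b"
  using assms by (induct n) auto

lemma four_block_upper_pow:
  assumes D: "D \<in> carrier_mat a a" and S: "S \<in> carrier_mat a b" and T: "T \<in> carrier_mat b b"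
  shows "four_block_mat D S (0\<^sub>m b a) T ^\<^sub>m n
    = four_block_mat (D ^\<^sub>m n) (pow_corner D S T n) (0\<^sub>m b a) (T ^\<^sub>m n)"
proof (induct n)
  case 0
  then show ?case using D S T by simp
next
  case (Suc n)
  note X = pow_corner_carrier[OF D S T, of n]
  have "four_block_mat D S (0\<^sub>m b a) T ^\<^sub>m Suc n
      = four_block_mat (D ^\<^sub>m n) (pow_corner D S T n) (0\<^sub>m b a) (T ^\<^sub>m n) * four_block_mat D S (0\<^sub>m b a) T"
    using Suc by simp
  also have "\<dots> = four_block_mat (D ^\<^sub>m n * D + pow_corner D S T n * 0\<^sub>m b a)
      (D ^\<^sub>m n * S + pow_corner D S T n * T)
      (0\<^sub>m b a * D + T ^\<^sub>m n * 0\<^sub>m b a) (0\<^sub>m b a * S + T ^\<^sub>m n * T)"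
    using D S T X by (intro mult_four_block_mat) auto
  also have "\<dots> = four_block_mat (D ^\<^sub>m Suc n) (pow_corner D S T (Suc n)) (0\<^sub>m b a) (T ^\<^sub>m Suc n)"
    using D S T X by (intro cong_four_block_mat) (auto intro!: eq_matI)
  finally show ?case .
qed

lemma four_block_mat_upper_right_eq:
  assumes "four_block_mat A B C D = four_block_mat A' B' C' D'"
    and "A \<in> carrier_mat r1 c1" "A' \<in> carrier_mat r1 c1" "B \<in> carrier_mat r1 c2" "B' \<in> carrier_mat r1 c2"
    and "D \<in> carrier_mat r2 c2" "D' \<in> carrier_mat r2 c2"
  shows "B = B'"
proof (rule eq_matI)
  fix i k assume "i < dim_row B'" "k < dim_col B'"
  then have "four_block_mat A B C D $$ (i, c1 + k) = four_block_mat A' B' C' D' $$ (i, c1 + k)"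
    using assms(1) by simp
  then show "B $$ (i,k) = B' $$ (i,k)" using assms(2-) \<open>i < dim_row B'\<close> \<open>k < dim_col B'\<close> by simp
qed (use assms in auto)

lemma pow_corner_add:
  assumes D: "D \<in> carrier_mat a a" and S: "S \<in> carrier_mat a b" and T: "T \<in> carrier_mat b b"
  shows "pow_corner D S T (n + m) = D ^\<^sub>m n * pow_corner D S T m + pow_corner D S T n * T ^\<^sub>m m"
proof -
  let ?A = "four_block_mat D S (0\<^sub>m b a) T"
  note X = pow_corner_carrier[OF D S T]
  have "?A \<in> carrier_mat (a + b) (a + b)" using D T by simp
  then have "?A ^\<^sub>m (n + m) = ?A ^\<^sub>m n * ?A ^\<^sub>m m" by (rule pow_mat_add)
  then have "four_block_mat (D ^\<^sub>m (n + m)) (pow_corner D S T (n + m)) (0\<^sub>m b a) (T ^\<^sub>m (n + m))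
      = four_block_mat (D ^\<^sub>m n) (pow_corner D S T n) (0\<^sub>m b a) (T ^\<^sub>m n)
        * four_block_mat (D ^\<^sub>m m) (pow_corner D S T m) (0\<^sub>m b a) (T ^\<^sub>m m)"
    unfolding four_block_upper_pow[OF D S T] .
  also have "\<dots> = four_block_mat (D ^\<^sub>m n * D ^\<^sub>m m + pow_corner D S T n * 0\<^sub>m b a)
      (D ^\<^sub>m n * pow_corner D S T m + pow_corner D S T n * T ^\<^sub>m m)
      (0\<^sub>m b a * D ^\<^sub>m m + T ^\<^sub>m n * 0\<^sub>m b a) (0\<^sub>m b a * pow_corner D S T m + T ^\<^sub>m n * T ^\<^sub>m m)"
    by (rule mult_four_block_mat[OF pow_carrier_mat[OF D] X zero_carrier_mat pow_carrier_mat[OF T]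
          pow_carrier_mat[OF D] X zero_carrier_mat pow_carrier_mat[OF T]])
  finally show ?thesis
    by (rule four_block_mat_upper_right_eq[OF _ pow_carrier_mat[OF D] _ X _ pow_carrier_mat[OF T]])
      (use D T X in \<open>auto intro!: add_carrier_mat mult_carrier_mat simp del: pow_corner.simps\<close>)
qed

lemma pow_tendsto_absorbs:
  assumes D: "D \<in> carrier_mat a a" and Th: "Th \<in> carrier_mat a a"
    and lim: "mat_tendsto (\<lambda>t. D ^\<^sub>m t) Th"
  shows "Th * D ^\<^sub>m j = Th"
proof -
  have lim_D: "mat_tendsto (\<lambda>t. D ^\<^sub>m t * D) (Th * D)"
    by (rule mat_tendsto_mult_right[OF pow_carrier_mat[OF D] Th D lim])
  have ThD: "Th * D = Th"
  proof (rule eq_matI)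
    fix i k assume "i < dim_row Th" "k < dim_col Th"
    then have ik: "i < a" "k < a" using Th by auto
    have "(\<lambda>t. (D ^\<^sub>m Suc t) $$ (i,k)) \<longlonglongrightarrow> (Th * D) $$ (i,k)"
      using lim_D ik Th D by (simp add: mat_tendsto_def)
    moreover have "(\<lambda>t. (D ^\<^sub>m Suc t) $$ (i,k)) \<longlonglongrightarrow> Th $$ (i,k)"
      using LIMSEQ_Suc[of "\<lambda>t. (D ^\<^sub>m t) $$ (i,k)"] lim ik Th by (simp add: mat_tendsto_def)
    ultimately show "(Th * D) $$ (i,k) = Th $$ (i,k)" by (rule LIMSEQ_unique)
  qed (use D Th in auto)
  show ?thesis
  proof (induct j)
    case 0
    then show ?case using Th D by simp
  next
    case (Suc j)
    have "Th * D ^\<^sub>m Suc j = (Th * D ^\<^sub>m j) * D"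
      using assoc_mult_mat[OF Th pow_carrier_mat[OF D] D] by simp
    then show ?case using Suc ThD by simp
  qed
qed

text \<open>Since \<open>\<Theta> D = \<Theta>\<close>, left multiplication by \<open>\<Theta>\<close> turns the corner recursion into
  \<open>Y\<^sub>m\<^sub>+\<^sub>1 = \<Theta> S + Y\<^sub>m T\<close>, solved by \<open>Y\<^sub>m = L - L T\<^sup>m\<close> with \<open>L (I - T) = \<Theta> S\<close>.\<close>

lemma pow_corner_projected:
  assumes D: "D \<in> carrier_mat a a" and S: "S \<in> carrier_mat a b" and T: "T \<in> carrier_mat b b"
    and Th: "Th \<in> carrier_mat a a" "\<And>j. Th * D ^\<^sub>m j = Th"
    and Inv: "Inv \<in> carrier_mat b b" "Inv * (1\<^sub>m b - T) = 1\<^sub>m b"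
  shows "Th * pow_corner D S T m = Th * (S * Inv) - Th * (S * Inv) * T ^\<^sub>m m"
proof (induct m)
  case 0
  then show ?case using Th S Inv T by (intro eq_matI) auto
next
  case (Suc m)
  define L where "L = Th * (S * Inv)"
  have L: "L \<in> carrier_mat a b" unfolding L_def using Th S Inv by simp
  note X = pow_corner_carrier[OF D S T, of m]
  have M: "1\<^sub>m b - T \<in> carrier_mat b b" using T by (simp add: minus_carrier_mat)
  have "L * (1\<^sub>m b - T) = Th * (S * (Inv * (1\<^sub>m b - T)))"
    unfolding L_def
    by (simp only: assoc_mult_mat[OF Th(1) mult_carrier_mat[OF S Inv(1)] M] assoc_mult_mat[OF S Inv(1) M])
  then have ThS: "Th * S = L - L * T"
    using Inv(2) S mult_minus_distrib_mat[OF L one_carrier_mat T] L by simp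
  have "Th * pow_corner D S T (Suc m) = Th * (D ^\<^sub>m m * S) + Th * (pow_corner D S T m * T)"
    unfolding pow_corner.simps using D S T Th X by (intro mult_add_distrib_mat) auto
  also have "Th * (D ^\<^sub>m m * S) = Th * S"
    using assoc_mult_mat[OF Th(1) pow_carrier_mat[OF D] S] Th(2) by simp
  also have "Th * (pow_corner D S T m * T) = (L - L * T ^\<^sub>m m) * T"
    using assoc_mult_mat[OF Th(1) X T] Suc unfolding L_def by simp
  also have "\<dots> = L * T - L * T ^\<^sub>m Suc m"
    using L T assoc_mult_mat[OF L pow_carrier_mat[OF T] T]
    by (simp add: minus_mult_distrib_mat[OF L mult_carrier_mat[OF L pow_carrier_mat[OF T]] T])
  finally show ?case unfolding ThS L_def[symmetric] using L T by (intro eq_matI) auto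
qed

lemma LIMSEQ_if_shifts_eventually_close:
  fixes x :: "nat \<Rightarrow> real"
  assumes "\<And>\<epsilon>. 0 < \<epsilon> \<Longrightarrow> \<exists>m N. \<forall>n\<ge>N. \<bar>x (n + m) - L\<bar> \<le> \<epsilon>"
  shows "x \<longlonglongrightarrow> L"
proof (rule LIMSEQ_I)
  fix r :: real assume "0 < r"
  then obtain m N where close: "\<forall>n\<ge>N. \<bar>x (n + m) - L\<bar> \<le> r / 2" using assms[of "r / 2"] by auto
  have "norm (x n - L) < r" if "N + m \<le> n" for n
  proof -
    have "N \<le> n - m" "n - m + m = n" using that by auto
    then have "\<bar>x n - L\<bar> \<le> r / 2" using close[rule_format, of "n - m"] by simp
    then show ?thesis using that \<open>0 < r\<close> by simp
  qed
  then show "\<exists>no. \<forall>n\<ge>no. norm (x n - L) < r" by blast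
qed

lemma pow_corner_projected_tendsto:
  assumes D: "D \<in> carrier_mat a a" and S: "S \<in> carrier_mat a b" and T: "T \<in> carrier_mat b b"
    and Th: "Th \<in> carrier_mat a a" and D_lim: "mat_tendsto (\<lambda>t. D ^\<^sub>m t) Th"
    and T_lim: "mat_tendsto (\<lambda>t. T ^\<^sub>m t) (0\<^sub>m b b)"
    and Inv: "Inv \<in> carrier_mat b b" "Inv * (1\<^sub>m b - T) = 1\<^sub>m b"
  shows "mat_tendsto (\<lambda>m. Th * pow_corner D S T m) (Th * (S * Inv))"
proof -
  define L where "L = Th * (S * Inv)"
  have L: "L \<in> carrier_mat a b" unfolding L_def using Th S Inv by simp
  have "mat_tendsto (\<lambda>m. L * T ^\<^sub>m m) (L * 0\<^sub>m b b)"
    by (rule mat_tendsto_mult_left[OF pow_carrier_mat[OF T] zero_carrier_mat L T_lim])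
  then have lim: "(\<lambda>m. L $$ (i,k) - (L * T ^\<^sub>m m) $$ (i,k)) \<longlonglongrightarrow> L $$ (i,k) - (L * 0\<^sub>m b b) $$ (i,k)"
    if "i < a" "k < b" for i k
    using L that by (intro tendsto_diff tendsto_const) (simp add: mat_tendsto_def)
  have eq: "(Th * pow_corner D S T m) $$ (i,k) = L $$ (i,k) - (L * T ^\<^sub>m m) $$ (i,k)"
    if "i < a" "k < b" for m i k
    using pow_corner_projected[OF D S T Th pow_tendsto_absorbs[OF D Th D_lim] Inv] L T that
    unfolding L_def[symmetric] by simp
  show ?thesis
    unfolding mat_tendsto_def L_def[symmetric]
  proof (intro allI impI)
    fix i k assume "i < dim_row L" "k < dim_col L"
    then have ik: "i < a" "k < b" using L by auto
    have "(L * 0\<^sub>m b b) $$ (i,k) = 0" using L ik by simp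
    then show "(\<lambda>m. (Th * pow_corner D S T m) $$ (i,k)) \<longlonglongrightarrow> L $$ (i,k)"
      using lim[OF ik] eq[OF ik] by simp
  qed
qed

text \<open>Write \<open>X\<^sub>n\<^sub>+\<^sub>m = D\<^sup>n X\<^sub>m + X\<^sub>n T\<^sup>m\<close>: for fixed large \<open>m\<close> the last term is small
  uniformly in \<open>n\<close>, and the first one tends to \<open>\<Theta> X\<^sub>m\<close>, which is close to the limit.\<close>

lemma pow_corner_tendsto:
  assumes D: "D \<in> carrier_mat a a" and S: "S \<in> carrier_mat a b" and T: "T \<in> carrier_mat b b"
    and Th: "Th \<in> carrier_mat a a" and D_lim: "mat_tendsto (\<lambda>t. D ^\<^sub>m t) Th"
    and T_lim: "mat_tendsto (\<lambda>t. T ^\<^sub>m t) (0\<^sub>m b b)"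
    and Inv: "Inv \<in> carrier_mat b b" "Inv * (1\<^sub>m b - T) = 1\<^sub>m b"
    and bound: "\<And>n i j. i < a \<Longrightarrow> j < b \<Longrightarrow> \<bar>pow_corner D S T n $$ (i,j)\<bar> \<le> C"
  shows "mat_tendsto (pow_corner D S T) (Th * (S * Inv))"
proof -
  define X where "X = pow_corner D S T"
  define L where "L = Th * (S * Inv)"
  have X: "X n \<in> carrier_mat a b" for n unfolding X_def by (rule pow_corner_carrier[OF D S T])
  have L: "L \<in> carrier_mat a b" unfolding L_def using Th S Inv by simp
  have "(\<lambda>n. X n $$ (i,k)) \<longlonglongrightarrow> L $$ (i,k)" if ik: "i < a" "k < b" for i k
  proof (rule LIMSEQ_if_shifts_eventually_close)
    fix \<epsilon> :: real assume "0 < \<epsilon>"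
    have "(\<lambda>m. (Th * X m) $$ (i,k)) \<longlonglongrightarrow> L $$ (i,k)"
      using pow_corner_projected_tendsto[OF D S T Th D_lim T_lim Inv] ik
        carrier_matD[OF Th] carrier_matD[OF Inv(1)]
      unfolding X_def L_def mat_tendsto_def by simp
    then have e1: "\<forall>\<^sub>F m in sequentially. \<bar>(Th * X m) $$ (i,k) - L $$ (i,k)\<bar> < \<epsilon> / 3"
      using \<open>0 < \<epsilon>\<close> by (auto dest: tendstoD[where e="\<epsilon> / 3"] simp: dist_real_def)
    have "(\<lambda>m. C * (\<Sum>j<b. \<bar>(T ^\<^sub>m m) $$ (j,k)\<bar>)) \<longlonglongrightarrow> C * (\<Sum>j<b. \<bar>0\<bar>)"
      using T_lim ik by (intro tendsto_intros) (auto simp: mat_tendsto_def)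
    then have e2: "\<forall>\<^sub>F m in sequentially. C * (\<Sum>j<b. \<bar>(T ^\<^sub>m m) $$ (j,k)\<bar>) < \<epsilon> / 3"
      using \<open>0 < \<epsilon>\<close> by (auto dest!: tendstoD[where e="\<epsilon> / 3"] simp: dist_real_def elim!: eventually_mono)
    obtain m where
      m1: "\<bar>(Th * X m) $$ (i,k) - L $$ (i,k)\<bar> < \<epsilon> / 3" and
      m2: "C * (\<Sum>j<b. \<bar>(T ^\<^sub>m m) $$ (j,k)\<bar>) < \<epsilon> / 3"
    proof -
      obtain M where "\<forall>m\<ge>M. \<bar>(Th * X m) $$ (i,k) - L $$ (i,k)\<bar> < \<epsilon> / 3
          \<and> C * (\<Sum>j<b. \<bar>(T ^\<^sub>m m) $$ (j,k)\<bar>) < \<epsilon> / 3"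
        using eventually_conj[OF e1 e2] by (auto simp: eventually_sequentially)
      then show ?thesis by (intro that[of M]) auto
    qed
    have "mat_tendsto (\<lambda>n. D ^\<^sub>m n * X m) (Th * X m)"
      by (rule mat_tendsto_mult_right[OF pow_carrier_mat[OF D] Th X D_lim])
    then have "(\<lambda>n. (D ^\<^sub>m n * X m) $$ (i,k)) \<longlonglongrightarrow> (Th * X m) $$ (i,k)"
      using ik Th X[of m] by (simp add: mat_tendsto_def)
    then obtain N where N: "\<And>n. N \<le> n \<Longrightarrow> \<bar>(D ^\<^sub>m n * X m) $$ (i,k) - (Th * X m) $$ (i,k)\<bar> < \<epsilon> / 3"
      using LIMSEQ_D[of _ _ "\<epsilon> / 3"] \<open>0 < \<epsilon>\<close> by (metis real_norm_def zero_less_divide_iff zero_less_numeral)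
    have "\<bar>X (n + m) $$ (i,k) - L $$ (i,k)\<bar> \<le> \<epsilon>" if "N \<le> n" for n
    proof -
      have "\<bar>(X n * T ^\<^sub>m m) $$ (i,k)\<bar> = \<bar>\<Sum>j<b. X n $$ (i,j) * (T ^\<^sub>m m) $$ (j,k)\<bar>"
        using index_mult_mat_sum[OF X pow_carrier_mat[OF T] ik] by simp
      also have "\<dots> \<le> (\<Sum>j<b. C * \<bar>(T ^\<^sub>m m) $$ (j,k)\<bar>)"
        using bound[OF ik(1)] unfolding X_def
        by (intro order_trans[OF sum_abs] sum_mono) (auto simp: abs_mult intro: mult_right_mono)
      finally have small: "\<bar>(X n * T ^\<^sub>m m) $$ (i,k)\<bar> < \<epsilon> / 3" using m2 by (simp add: sum_distrib_left)
      have "X (n + m) $$ (i,k) = (D ^\<^sub>m n * X m) $$ (i,k) + (X n * T ^\<^sub>m m) $$ (i,k)"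
        using pow_corner_add[OF D S T, of n m] X[of m] X[of n] T ik unfolding X_def by simp
      then show ?thesis using N[OF that] m1 small by linarith
    qed
    then show "\<exists>m N. \<forall>n\<ge>N. \<bar>X (n + m) $$ (i,k) - L $$ (i,k)\<bar> \<le> \<epsilon>" by blast
  qed
  then show ?thesis unfolding mat_tendsto_def X_def L_def using carrier_matD[OF L[unfolded L_def]] by simp
qed

lemma upper_block_stochastic_parts:
  assumes D: "D \<in> carrier_mat a a" and S: "S \<in> carrier_mat a b" and T: "T \<in> carrier_mat b b"
    and nonneg: "nonneg_mat (four_block_mat D S (0\<^sub>m b a) T)"
    and stoch: "left_stochastic (four_block_mat D S (0\<^sub>m b a) T)"
  shows "left_stochastic D" and "substochastic T"
    and "\<And>n i j. i < a \<Longrightarrow> j < b \<Longrightarrow> \<bar>pow_corner D S T n $$ (i,j)\<bar> \<le> 1"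
proof -
  let ?A = "four_block_mat D S (0\<^sub>m b a) T"
  have A: "?A \<in> carrier_mat (a + b) (a + b)" using D T by simp
  have col: "col_sum ?A k = 1" if "k < a + b" for k
    using stoch that carrier_matD[OF D] carrier_matD[OF T] by (simp add: left_stochastic_iff_col_sum)
  have entry: "0 \<le> ?A $$ (i,k)" if "i < a + b" "k < a + b" for i k
    by (rule nonneg_matD[OF nonneg]) (use that carrier_matD[OF D] carrier_matD[OF T] in simp_all)
  show "left_stochastic D"
    unfolding left_stochastic_iff_col_sum
  proof (intro allI impI)
    fix k assume "k < dim_col D"
    then have "k < a" using D by auto
    then show "col_sum D k = 1" using col[of k] col_sum_four_block_left[OF D T \<open>k < a\<close>, of S] by simp
  qed
  have "nonneg_mat S"
    unfolding nonneg_mat_def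
  proof (intro allI impI)
    fix i k assume ik: "i < dim_row S" "k < dim_col S"
    then have "i < a + b" "a + k < a + b" using S by auto
    from entry[OF this] show "0 \<le> S $$ (i,k)" using ik S carrier_matD[OF D] carrier_matD[OF T] by simp
  qed
  moreover have T0: "nonneg_mat T"
    unfolding nonneg_mat_def
  proof (intro allI impI)
    fix i k assume ik: "i < dim_row T" "k < dim_col T"
    then have "a + i < a + b" "a + k < a + b" using T by auto
    from entry[OF this] show "0 \<le> T $$ (i,k)" using ik T carrier_matD[OF D] by simp
  qed
  ultimately have "col_sum T k \<le> 1" if "k < b" for k
    using col[of "a + k"] col_sum_four_block_right[OF D S T that] col_sum_nonneg[of S k] S that
    by simp
  then show "substochastic T" using T0 T by (simp add: substochastic_def)
  fix n i j assume ij: "i < a" "j < b"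
  have "(?A ^\<^sub>m n) $$ (i, a + j) = pow_corner D S T n $$ (i,j)"
    using four_block_upper_pow[OF D S T, of n] pow_corner_carrier[OF D S T, of n] D T ij by simp
  moreover have "0 \<le> (?A ^\<^sub>m n) $$ (i, a + j)" "(?A ^\<^sub>m n) $$ (i, a + j) \<le> 1"
    using nonneg_matD[OF nonneg_mat_pow[OF A nonneg], of i n "a + j"]
      nonneg_left_stochastic_entry_le_1[OF nonneg_mat_pow[OF A nonneg] left_stochastic_pow[OF A stoch], of i n "a + j"]
      carrier_matD[OF D] carrier_matD[OF T] ij by simp_all
  ultimately show "\<bar>pow_corner D S T n $$ (i,j)\<bar> \<le> 1" by simp
qed

theorem lemma1:
  fixes As :: "real mat list"   (* A_1, ..., A_S *)
    and NsR :: "nat list"       (* N_{S+1}, ..., N_{S+R} *)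
    and TSR TRR A :: "real mat"
  defines "NgS \<equiv> sum_list (map dim_row As)"
    and "NgR \<equiv> sum_list NsR"
  assumes S_pos: "As \<noteq> []"
    and As_prim: "\<forall>As_s \<in> set As. dim_row As_s > 0 \<and> primitive_mat As_s"
    and NsR_pos: "\<forall>n \<in> set NsR. n > 0"
    and TSR_carrier: "TSR \<in> carrier_mat NgS NgR"
    and TRR_carrier: "TRR \<in> carrier_mat NgR NgR"
    and TRR_tri: "block_upper_tri TRR NsR"
    and Ar_irred: "\<forall>r < length NsR. irreducible_mat (diag_blk TRR NsR r)"
    and Ar_leak: "\<forall>r < length NsR. \<exists>k < NsR ! r.
                    (\<Sum>i < NsR ! r. diag_blk TRR NsR r $$ (i,k)) < 1"
    and A_def: "A = four_block_mat (diag_block_mat As) TSR (0\<^sub>m NgR NgS) TRR"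
    and A_nonneg: "nonneg_mat A"
    and A_stoch: "left_stochastic A"
  shows "invertible_mat (1\<^sub>m NgR - TRR) \<and>
    (let W = TSR * the (mat_inverse (1\<^sub>m NgR - TRR));
         \<Theta> = diag_block_mat (map perron_block As);
         Ainf = four_block_mat \<Theta> (\<Theta> * W) (0\<^sub>m NgR NgS) (0\<^sub>m NgR NgR)
     in \<forall>i < NgS + NgR. \<forall>k < NgS + NgR.
          (\<lambda>n. (A ^\<^sub>m n) $$ (i,k)) \<longlonglongrightarrow> Ainf $$ (i,k))"
proof -
  let ?D = "diag_block_mat As" and ?\<Theta> = "diag_block_mat (map perron_block As)"
  have "\<forall>B\<in>set As. square_mat B" using As_prim by (auto simp: primitive_mat_def)
  from diag_block_mat_carrier[OF this] have D: "?D \<in> carrier_mat NgS NgS" unfolding NgS_def .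
  have \<Theta>: "?\<Theta> \<in> carrier_mat NgS NgS"
    using diag_block_mat_carrier[of "map perron_block As"] by (simp add: NgS_def perron_block_def o_def)
  note parts = upper_block_stochastic_parts[OF D TSR_carrier TRR_carrier,
      folded A_def, OF A_nonneg A_stoch]
  have D_lim: "mat_tendsto (\<lambda>t. ?D ^\<^sub>m t) ?\<Theta>"
    by (rule diag_block_primitive_stochastic_pow_tendsto[OF As_prim parts(1)])
  have T_lim: "mat_tendsto (\<lambda>t. TRR ^\<^sub>m t) (0\<^sub>m NgR NgR)"
    using block_triangular_cols_leaky[OF TRR_carrier parts(2) NgR_def[THEN meta_eq_to_obj_eq] TRR_tri Ar_irred Ar_leak]
    by (rule pow_tendsto_zero_if_cols_leaky[OF TRR_carrier parts(2)])
  obtain Inv where Inv: "mat_inverse (1\<^sub>m NgR - TRR) = Some Inv" "Inv \<in> carrier_mat NgR NgR"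
    "Inv * (1\<^sub>m NgR - TRR) = 1\<^sub>m NgR" "invertible_mat (1\<^sub>m NgR - TRR)"
    by (rule one_minus_invertible_if_pow_tendsto_zero[OF TRR_carrier T_lim])
  have "mat_tendsto (\<lambda>n. A ^\<^sub>m n) (four_block_mat ?\<Theta> (?\<Theta> * (TSR * Inv)) (0\<^sub>m NgR NgS) (0\<^sub>m NgR NgR))"
    unfolding A_def four_block_upper_pow[OF D TSR_carrier TRR_carrier]
    by (rule mat_tendsto_four_block[OF pow_carrier_mat[OF D] pow_carrier_mat[OF TRR_carrier] \<Theta>
          mult_carrier_mat[OF \<Theta> mult_carrier_mat[OF TSR_carrier Inv(2)]] zero_carrier_mat zero_carrier_mat
          D_lim pow_corner_tendsto[OF D TSR_carrier TRR_carrier \<Theta> D_lim T_lim Inv(2,3) parts(3)]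
          mat_tendsto_const T_lim])
  then show ?thesis
    unfolding Let_def mat_tendsto_def using Inv carrier_matD[OF \<Theta>] by simp
qed

end
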